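(* Let $R$ be a P$v$MD and let $P$ be a $t$-prime ideal of $R$. The following conditions are equivalent: (i) $P$ is branched; (ii) $P$ is a minimal prime of a principal ideal of $R$; (iii) $P$ is a minimal prime of a finitely generated ideal of $R$; (iv) $P$ is a minimal prime of a $v$-finite divisorial ideal of $R$; (v) $P$ is not the union of the set of prime ideals of $R$ properly contained in $P$.
   Context: $R$ is an integral domain with quotient field $K\neq R$. For nonzero $R$-submodules $A,B$ of $K$, $(A:B)=\{x\in K: xB\subseteq A\}$. For a nonzero fractional ideal $I$, $I_v=(R:(R:I))$ and $I_t=\bigcup\{J_v: J\subseteq I \text{ nonzero finitely generated}\}$. $I$ is divisorial if $I=I_v$ and a $t$-ideal if $I=I_t$; a $v$-finite divisorial ideal is an ideal of the form $J_v$ with $J$ finitely generated. A $t$-prime is a prime $t$-ideal; a $t$-maximal ideal is an ideal maximal among proper $t$-ideals (it is prime). $R$ is a P$v$MD (Prüfer $v$-multiplication domain) if $R_M$ is a valuation domain for every $t$-maximal ideal $M$. A prime ideal $P$ is branched if there exists a $P$-primary ideal different from $P$. *)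

theory Defs
  imports Main
begin

text \<open>Convention: the integral domain R is a subring of a field K (the type 'a)
  whose quotient field is K. All fractional ideals live in K.\<close>

definition subring :: "'a::field set \<Rightarrow> bool" where
  "subring R \<longleftrightarrow> 0 \<in> R \<and> 1 \<in> R \<and> (\<forall>x\<in>R. \<forall>y\<in>R. x + y \<in> R \<and> x - y \<in> R \<and> x * y \<in> R)"

definition quotient_field_is_UNIV :: "'a::field set \<Rightarrow> bool" where
  "quotient_field_is_UNIV R \<longleftrightarrow> (\<forall>x. \<exists>a\<in>R. \<exists>b\<in>R. b \<noteq> 0 \<and> x = a / b)"

definition submod :: "'a::field set \<Rightarrow> 'a set \<Rightarrow> bool" where
  "submod R A \<longleftrightarrow> 0 \<in> A \<and> (\<forall>x\<in>A. \<forall>y\<in>A. x + y \<in> A) \<and> (\<forall>r\<in>R. \<forall>x\<in>A. r * x \<in> A)"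

definition fractional_ideal :: "'a::field set \<Rightarrow> 'a set \<Rightarrow> bool" where
  "fractional_ideal R I \<longleftrightarrow> submod R I \<and> I \<noteq> {0} \<and> (\<exists>d\<in>R. d \<noteq> 0 \<and> (\<forall>x\<in>I. d * x \<in> R))"

definition ideal :: "'a::field set \<Rightarrow> 'a set \<Rightarrow> bool" where
  "ideal R I \<longleftrightarrow> I \<subseteq> R \<and> submod R I"

definition prime_ideal :: "'a::field set \<Rightarrow> 'a set \<Rightarrow> bool" where
  "prime_ideal R P \<longleftrightarrow> ideal R P \<and> P \<noteq> R \<and> (\<forall>a\<in>R. \<forall>b\<in>R. a * b \<in> P \<longrightarrow> a \<in> P \<or> b \<in> P)"

definition gen_sub :: "'a::field set \<Rightarrow> 'a set \<Rightarrow> 'a set" where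
  "gen_sub R S = {x. \<exists>T c. finite T \<and> T \<subseteq> S \<and> (\<forall>s\<in>T. c s \<in> R) \<and> x = (\<Sum>s\<in>T. c s * s)}"

definition colon :: "'a::field set \<Rightarrow> 'a set \<Rightarrow> 'a set" where
  "colon A B = {x. \<forall>b\<in>B. x * b \<in> A}"

definition v_op :: "'a::field set \<Rightarrow> 'a set \<Rightarrow> 'a set" where
  "v_op R I = colon R (colon R I)"

definition t_op :: "'a::field set \<Rightarrow> 'a set \<Rightarrow> 'a set" where
  "t_op R I = \<Union>{v_op R J | J. \<exists>S. finite S \<and> J = gen_sub R S \<and> J \<noteq> {0} \<and> J \<subseteq> I}"

definition t_ideal :: "'a::field set \<Rightarrow> 'a set \<Rightarrow> bool" where
  "t_ideal R I \<longleftrightarrow> fractional_ideal R I \<and> t_op R I = I"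

definition t_prime :: "'a::field set \<Rightarrow> 'a set \<Rightarrow> bool" where
  "t_prime R P \<longleftrightarrow> prime_ideal R P \<and> t_ideal R P"

definition t_maximal :: "'a::field set \<Rightarrow> 'a set \<Rightarrow> bool" where
  "t_maximal R M \<longleftrightarrow> ideal R M \<and> M \<noteq> R \<and> t_ideal R M \<and>
     (\<forall>N. ideal R N \<and> N \<noteq> R \<and> t_ideal R N \<and> M \<subseteq> N \<longrightarrow> N = M)"

definition localization :: "'a::field set \<Rightarrow> 'a set \<Rightarrow> 'a set" where
  "localization R M = {a / s | a s. a \<in> R \<and> s \<in> R \<and> s \<notin> M}"

definition valuation_domain :: "'a::field set \<Rightarrow> bool" where
  "valuation_domain V \<longleftrightarrow> (\<forall>x. x \<noteq> 0 \<longrightarrow> x \<in> V \<or> inverse x \<in> V)"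

definition PvMD :: "'a::field set \<Rightarrow> bool" where
  "PvMD R \<longleftrightarrow> (\<forall>M. t_maximal R M \<longrightarrow> valuation_domain (localization R M))"

definition radical :: "'a::field set \<Rightarrow> 'a set \<Rightarrow> 'a set" where
  "radical R Q = {x\<in>R. \<exists>n::nat. x ^ n \<in> Q}"

definition primary_ideal :: "'a::field set \<Rightarrow> 'a set \<Rightarrow> bool" where
  "primary_ideal R Q \<longleftrightarrow> ideal R Q \<and> Q \<noteq> R \<and>
     (\<forall>a\<in>R. \<forall>b\<in>R. a * b \<in> Q \<longrightarrow> a \<in> Q \<or> (\<exists>n::nat. b ^ n \<in> Q))"

definition branched :: "'a::field set \<Rightarrow> 'a set \<Rightarrow> bool" where
  "branched R P \<longleftrightarrow> (\<exists>Q. primary_ideal R Q \<and> radical R Q = P \<and> Q \<noteq> P)"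

definition minimal_prime_of :: "'a::field set \<Rightarrow> 'a set \<Rightarrow> 'a set \<Rightarrow> bool" where
  "minimal_prime_of R P I \<longleftrightarrow> prime_ideal R P \<and> I \<subseteq> P \<and>
     (\<forall>Q. prime_ideal R Q \<and> I \<subseteq> Q \<and> Q \<subseteq> P \<longrightarrow> Q = P)"

end

theory Submission
  imports Defs
begin

text \<open>Everything happens in the localization \<open>R\<^sub>P\<close>, which is a valuation domain: P lies in a
  t-maximal ideal M, and \<open>R\<^sub>P\<close> contains the valuation domain \<open>R\<^sub>M\<close>.
  If \<open>a \<in> P\<close> lies in no smaller prime, then \<open>Q = a\<^sup>2 R\<^sub>P \<inter> R\<close> is P-primary and misses a, so P is
  branched. Conversely, ideals contracted from \<open>R\<^sub>P\<close> are totally ordered, so a P-primary \<open>Q \<noteq> P\<close>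
  lies in every prime \<open>Q' \<subset> P\<close> not contained in Q; then \<open>P = rad Q \<subseteq> Q'\<close>, so P is not the union
  of the smaller primes. For a finitely generated J, the ideal \<open>J R\<^sub>P\<close> is generated by some \<open>x \<in> J\<close>;
  clearing denominators gives \<open>d \<notin> P\<close> with \<open>d / x \<in> (R : J)\<close>, so \<open>J\<^sub>v\<close> lies in every prime
  below P that contains x, and a minimal prime of \<open>J\<^sub>v\<close> is not a union of smaller primes.\<close>

section \<open>Ideals and the v-operation\<close>

lemma subring_0: "subring R \<Longrightarrow> 0 \<in> R"
  and subring_1: "subring R \<Longrightarrow> 1 \<in> R"
  and subring_add: "subring R \<Longrightarrow> x \<in> R \<Longrightarrow> y \<in> R \<Longrightarrow> x + y \<in> R"
  and subring_mult: "subring R \<Longrightarrow> x \<in> R \<Longrightarrow> y \<in> R \<Longrightarrow> x * y \<in> R"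
  by (auto simp: subring_def)

lemma subring_power: "subring R \<Longrightarrow> x \<in> R \<Longrightarrow> x ^ n \<in> R"
  by (induction n) (auto intro: subring_1 subring_mult)

lemma submod_sum:
  assumes "submod R A" "finite T" "\<And>s. s \<in> T \<Longrightarrow> f s \<in> A"
  shows "sum f T \<in> A"
  using assms(2,3) by (induction T rule: finite_induct) (use assms(1) in \<open>auto simp: submod_def\<close>)

lemma submod_zero: "submod R {0}"
  by (simp add: submod_def)

lemma gen_sub_least:
  assumes "submod R A" "S \<subseteq> A"
  shows "gen_sub R S \<subseteq> A"
proof
  fix x assume "x \<in> gen_sub R S"
  then obtain T c where T: "finite T" "T \<subseteq> S" "\<forall>s\<in>T. c s \<in> R" "x = (\<Sum>s\<in>T. c s * s)"
    by (auto simp: gen_sub_def)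
  show "x \<in> A" unfolding T(4)
    by (rule submod_sum[OF assms(1) T(1)]) (use T assms in \<open>auto simp: submod_def\<close>)
qed

lemma gen_sub_superset: "subring R \<Longrightarrow> S \<subseteq> gen_sub R S"
  unfolding gen_sub_def
  by (force intro: exI[of _ "{s}" for s] exI[of _ "\<lambda>_. 1"] subring_1)

lemma zero_mem_gen_sub: "0 \<in> gen_sub R S"
  unfolding gen_sub_def by (force intro: exI[of _ "{}"])

lemma gen_sub_nonzero_imp: "gen_sub R S \<noteq> {0} \<Longrightarrow> \<exists>x\<in>S. x \<noteq> 0"
  using gen_sub_least[OF submod_zero, of S R] zero_mem_gen_sub[of R S] by blast

lemma ideal_mult: "ideal R I \<Longrightarrow> r \<in> R \<Longrightarrow> x \<in> I \<Longrightarrow> r * x \<in> I"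
  and ideal_add: "ideal R I \<Longrightarrow> x \<in> I \<Longrightarrow> y \<in> I \<Longrightarrow> x + y \<in> I"
  and ideal_0: "ideal R I \<Longrightarrow> 0 \<in> I"
  and ideal_subset: "ideal R I \<Longrightarrow> I \<subseteq> R"
  by (auto simp: ideal_def submod_def)

lemma ideal_eq_if_one_mem: "ideal R I \<Longrightarrow> 1 \<in> I \<Longrightarrow> I = R"
  using ideal_mult[of R I _ 1] ideal_subset[of R I] by force

lemma prime_ideal_ideal: "prime_ideal R P \<Longrightarrow> ideal R P"
  and prime_ideal_mult: "prime_ideal R P \<Longrightarrow> a \<in> R \<Longrightarrow> b \<in> R \<Longrightarrow> a * b \<in> P \<Longrightarrow> a \<in> P \<or> b \<in> P"
  by (simp_all add: prime_ideal_def)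

lemma prime_ideal_one_notin: "prime_ideal R P \<Longrightarrow> 1 \<notin> P"
  using ideal_eq_if_one_mem by (auto simp: prime_ideal_def)

lemma prime_ideal_power:
  assumes "subring R" "prime_ideal R P" "x \<in> R" "x ^ n \<in> P"
  shows "x \<in> P"
  using assms(4)
proof (induction n)
  case 0
  then show ?case using prime_ideal_one_notin[OF assms(2)] by simp
next
  case (Suc n)
  then show ?case using prime_ideal_mult[OF assms(2,3) subring_power[OF assms(1,3)]] by auto
qed

lemma prime_ideal_zero: "subring R \<Longrightarrow> prime_ideal R {0}"
  unfolding prime_ideal_def ideal_def submod_def using subring_0 subring_1 by fastforce

lemma minimal_prime_of_mono:
  assumes "minimal_prime_of R P I" "I \<subseteq> I'" "I' \<subseteq> P"
  shows "minimal_prime_of R P I'"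
  using assms unfolding minimal_prime_of_def by blast

lemma minimal_prime_of_subset_zero:
  assumes "subring R" "minimal_prime_of R P I" "I \<subseteq> {0}"
  shows "P = {0}"
proof -
  have "{0} \<subseteq> P"
    using assms(2) ideal_0[OF prime_ideal_ideal] unfolding minimal_prime_of_def by blast
  then show ?thesis
    using assms(2,3) prime_ideal_zero[OF assms(1)] unfolding minimal_prime_of_def by blast
qed

lemma primary_idealI:
  assumes "ideal R Q" "Q \<noteq> R"
    and "\<And>a s. a \<in> R \<Longrightarrow> s \<in> R \<Longrightarrow> s \<notin> radical R Q \<Longrightarrow> a * s \<in> Q \<Longrightarrow> a \<in> Q"
  shows "primary_ideal R Q"
  using assms unfolding primary_ideal_def radical_def by blast

lemma primary_ideal_subset_radical:
  assumes "primary_ideal R Q"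
  shows "Q \<subseteq> radical R Q"
proof
  fix x assume "x \<in> Q"
  then have "x \<in> R" "x ^ 1 \<in> Q"
    using assms ideal_subset by (auto simp: primary_ideal_def)
  then show "x \<in> radical R Q"
    unfolding radical_def by blast
qed

lemma colon_submod: "subring R \<Longrightarrow> submod R (colon R B)"
  unfolding submod_def colon_def subring_def by (auto simp: distrib_right mult.assoc)

lemma v_op_submod: "subring R \<Longrightarrow> submod R (v_op R I)"
  unfolding v_op_def by (rule colon_submod)

lemma v_op_superset: "I \<subseteq> v_op R I"
  unfolding v_op_def colon_def by (auto simp: mult.commute)

lemma v_op_mult_colon: "y \<in> v_op R I \<Longrightarrow> b \<in> colon R I \<Longrightarrow> y * b \<in> R"
  unfolding v_op_def colon_def by blast

lemma mem_colon_gen_sub: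
  assumes "subring R" "\<And>s. s \<in> S \<Longrightarrow> y * s \<in> R"
  shows "y \<in> colon R (gen_sub R S)"
proof -
  have "submod R {j. y * j \<in> R}"
    using assms(1) by (auto simp: submod_def subring_def distrib_left mult.left_commute)
  then have "gen_sub R S \<subseteq> {j. y * j \<in> R}"
    using assms(2) by (intro gen_sub_least) auto
  then show ?thesis by (auto simp: colon_def)
qed

section \<open>The t-operation and t-maximal ideals\<close>

lemma v_op_subset_t_op:
  assumes "finite S" "gen_sub R S \<noteq> {0}" "gen_sub R S \<subseteq> I"
  shows "v_op R (gen_sub R S) \<subseteq> t_op R I"
  using assms unfolding t_op_def by (intro Union_upper) blast

lemma t_op_superset:
  assumes "subring R" "submod R I" "I \<noteq> {0}"
  shows "I \<subseteq> t_op R I"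
proof
  fix x assume x: "x \<in> I"
  obtain y where y: "y \<in> I" "y \<noteq> 0"
    using assms(2,3) by (auto simp: submod_def)
  let ?J = "gen_sub R {x, y}"
  have "x \<in> ?J" "y \<in> ?J"
    using gen_sub_superset[OF assms(1), of "{x, y}"] by auto
  moreover have "?J \<subseteq> I"
    using gen_sub_least[OF assms(2)] x y by auto
  ultimately have "v_op R ?J \<subseteq> t_op R I"
    using y(2) by (intro v_op_subset_t_op) auto
  then show "x \<in> t_op R I"
    using v_op_superset \<open>x \<in> ?J\<close> by blast
qed

lemma v_op_subset_t_ideal:
  assumes "t_ideal R N" "finite S" "gen_sub R S \<noteq> {0}" "gen_sub R S \<subseteq> N"
  shows "v_op R (gen_sub R S) \<subseteq> N"
  using v_op_subset_t_op[OF assms(2-4)] assms(1) by (simp add: t_ideal_def)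

lemma ideal_Union_chain:
  assumes "C \<noteq> {}" "subset.chain A C" "\<And>X. X \<in> C \<Longrightarrow> ideal R X"
  shows "ideal R (\<Union>C)"
  unfolding ideal_def submod_def
proof (intro conjI ballI)
  show "\<Union>C \<subseteq> R"
    using ideal_subset[OF assms(3)] by blast
  obtain X where "X \<in> C"
    using assms(1) by blast
  then show "0 \<in> \<Union>C"
    using ideal_0[OF assms(3)] by blast
next
  fix x y assume "x \<in> \<Union>C" "y \<in> \<Union>C"
  then have "{x, y} \<subseteq> \<Union>C"
    by blast
  then obtain X where "X \<in> C" "{x, y} \<subseteq> X"
    using finite_subset_Union_chain[OF _ _ assms(1,2)] by (metis finite.emptyI finite_insert)
  then show "x + y \<in> \<Union>C"
    using ideal_add[OF assms(3)] by blast
next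
  fix r x assume "r \<in> R" "x \<in> \<Union>C"
  then show "r * x \<in> \<Union>C"
    using ideal_mult[OF assms(3)] by blast
qed

lemma ideal_fractional_ideal:
  assumes "subring R" "ideal R I" "I \<noteq> {0}"
  shows "fractional_ideal R I"
proof -
  have "\<exists>d\<in>R. d \<noteq> 0 \<and> (\<forall>x\<in>I. d * x \<in> R)"
    using subring_1[OF assms(1)] ideal_subset[OF assms(2)] by (intro bexI[of _ 1]) auto
  then show ?thesis
    using assms(2,3) by (simp add: fractional_ideal_def ideal_def)
qed

lemma t_ideal_Union_chain:
  assumes "subring R" "C \<noteq> {}" "subset.chain A C"
    and "\<And>X. X \<in> C \<Longrightarrow> ideal R X" "\<And>X. X \<in> C \<Longrightarrow> t_ideal R X"
  shows "t_ideal R (\<Union>C)"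
proof -
  have ideal: "ideal R (\<Union>C)"
    by (rule ideal_Union_chain[OF assms(2,3,4)])
  obtain X where X: "X \<in> C" "X \<noteq> {0}"
    using assms(2,5) by (auto simp: t_ideal_def fractional_ideal_def)
  then have nonzero: "\<Union>C \<noteq> {0}"
    using ideal_0[OF assms(4)] by blast
  have "t_op R (\<Union>C) \<subseteq> \<Union>C"
  proof
    fix x assume "x \<in> t_op R (\<Union>C)"
    then obtain S where S: "finite S" "gen_sub R S \<noteq> {0}" "gen_sub R S \<subseteq> \<Union>C"
      "x \<in> v_op R (gen_sub R S)"
      unfolding t_op_def by blast
    then have "S \<subseteq> \<Union>C"
      using gen_sub_superset[OF assms(1), of S] by blast
    then obtain Y where Y: "Y \<in> C" "S \<subseteq> Y"
      by (rule finite_subset_Union_chain[OF S(1) _ assms(2,3)])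
    then have "gen_sub R S \<subseteq> Y"
      using gen_sub_least[OF _ Y(2)] assms(4)[OF Y(1)] by (simp add: ideal_def)
    then show "x \<in> \<Union>C"
      using v_op_subset_t_ideal[OF assms(5) S(1,2)] S(4) Y(1) by blast
  qed
  moreover have "\<Union>C \<subseteq> t_op R (\<Union>C)"
    using t_op_superset[OF assms(1) _ nonzero] ideal by (simp add: ideal_def)
  ultimately show ?thesis
    using ideal_fractional_ideal[OF assms(1) ideal nonzero] by (simp add: t_ideal_def)
qed

lemma exists_t_maximal_superset:
  assumes "subring R" "ideal R I" "I \<noteq> R" "t_ideal R I"
  shows "\<exists>M. t_maximal R M \<and> I \<subseteq> M"
proof -
  define A where "A = {N. ideal R N \<and> N \<noteq> R \<and> t_ideal R N \<and> I \<subseteq> N}"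
  have chain: "\<Union>C \<in> A" if "C \<noteq> {}" "subset.chain A C" for C
  proof -
    have members: "ideal R X" "X \<noteq> R" "t_ideal R X" "I \<subseteq> X" if "X \<in> C" for X
      using that \<open>subset.chain A C\<close> by (auto simp: A_def subset_chain_def)
    have "1 \<notin> \<Union>C"
      using members(1,2) ideal_eq_if_one_mem by blast
    then have "\<Union>C \<noteq> R"
      using subring_1[OF assms(1)] by blast
    moreover have "I \<subseteq> \<Union>C"
      using members(4) that(1) by blast
    ultimately show ?thesis
      unfolding A_def using ideal_Union_chain[OF that members(1)]
        t_ideal_Union_chain[OF assms(1) that members(1,3)] by blast
  qed
  have "I \<in> A"
    using assms(2-4) by (simp add: A_def)
  then obtain M where M: "M \<in> A" "\<And>X. X \<in> A \<Longrightarrow> M \<subseteq> X \<Longrightarrow> X = M"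
    using subset_Zorn_nonempty[OF _ chain] by blast
  have "I \<subseteq> M"
    using M(1) by (simp add: A_def)
  then have "t_maximal R M"
    using M unfolding t_maximal_def A_def by auto
  with \<open>I \<subseteq> M\<close> show ?thesis
    by blast
qed

section \<open>Localization at a prime\<close>

lemma localizationE:
  assumes "z \<in> localization R P"
  obtains a s where "a \<in> R" "s \<in> R" "s \<notin> P" "z = a / s"
  using assms by (auto simp: localization_def)

lemma divide_mem_localization: "a \<in> R \<Longrightarrow> s \<in> R \<Longrightarrow> s \<notin> P \<Longrightarrow> a / s \<in> localization R P"
  by (auto simp: localization_def)

lemma localization_superset:
  assumes "subring R" "prime_ideal R P"
  shows "R \<subseteq> localization R P"
  using divide_mem_localization[OF _ subring_1[OF assms(1)] prime_ideal_one_notin[OF assms(2)]]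
  by fastforce

lemma inverse_mem_localization:
  assumes "subring R" "s \<in> R" "s \<notin> P"
  shows "inverse s \<in> localization R P"
  using divide_mem_localization[OF subring_1[OF assms(1)] assms(2,3)] by (simp add: inverse_eq_divide)

lemma prime_ideal_notin_nonzero: "prime_ideal R P \<Longrightarrow> s \<notin> P \<Longrightarrow> s \<noteq> 0"
  using ideal_0 prime_ideal_ideal by blast

lemma localization_mult:
  assumes "subring R" "prime_ideal R P" "x \<in> localization R P" "y \<in> localization R P"
  shows "x * y \<in> localization R P"
proof -
  obtain a s where a: "a \<in> R" "s \<in> R" "s \<notin> P" "x = a / s"
    using assms(3) by (rule localizationE)
  obtain b t where b: "b \<in> R" "t \<in> R" "t \<notin> P" "y = b / t"
    using assms(4) by (rule localizationE)
  have "x * y = (a * b) / (s * t)"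
    using a b by simp
  then show ?thesis
    using a b prime_ideal_mult[OF assms(2)] subring_mult[OF assms(1)]
    by (metis divide_mem_localization)
qed

lemma localization_add:
  assumes "subring R" "prime_ideal R P" "x \<in> localization R P" "y \<in> localization R P"
  shows "x + y \<in> localization R P"
proof -
  obtain a s where a: "a \<in> R" "s \<in> R" "s \<notin> P" "x = a / s"
    using assms(3) by (rule localizationE)
  obtain b t where b: "b \<in> R" "t \<in> R" "t \<notin> P" "y = b / t"
    using assms(4) by (rule localizationE)
  have "x + y = (a * t + b * s) / (s * t)"
    using a b prime_ideal_notin_nonzero[OF assms(2)] by (simp add: field_simps)
  then show ?thesis
    using a b prime_ideal_mult[OF assms(2)] subring_mult[OF assms(1)] subring_add[OF assms(1)]
    by (metis divide_mem_localization)
qed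

lemma localization_antimono:
  assumes "P \<subseteq> M"
  shows "localization R M \<subseteq> localization R P"
  using assms by (auto simp: localization_def)

text \<open>An ideal Q with \<open>a s \<in> Q \<Longrightarrow> a \<in> Q\<close> for all \<open>s \<notin> P\<close> satisfies \<open>Q R\<^sub>P \<inter> R = Q\<close>.\<close>
lemma localization_mult_mem:
  assumes "subring R" "prime_ideal R P" "ideal R Q"
    and saturated: "\<And>a s. a \<in> R \<Longrightarrow> s \<in> R \<Longrightarrow> s \<notin> P \<Longrightarrow> a * s \<in> Q \<Longrightarrow> a \<in> Q"
    and "z \<in> Q" "v \<in> localization R P" "z * v \<in> R"
  shows "z * v \<in> Q"
proof -
  obtain b s where b: "b \<in> R" "s \<in> R" "s \<notin> P" "v = b / s"
    using assms(6) by (rule localizationE)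
  have "z * v * s = b * z"
    using b prime_ideal_notin_nonzero[OF assms(2)] by simp
  also have "\<dots> \<in> Q"
    using ideal_mult[OF assms(3) b(1) assms(5)] .
  finally show ?thesis
    using saturated[OF assms(7) b(2,3)] by blast
qed

lemma prime_localization_mult_mem:
  assumes "subring R" "prime_ideal R P" "prime_ideal R Q" "Q \<subseteq> P"
    and "z \<in> Q" "v \<in> localization R P" "z * v \<in> R"
  shows "z * v \<in> Q"
  using assms prime_ideal_mult[OF assms(3)]
  by (intro localization_mult_mem[OF assms(1,2) prime_ideal_ideal[OF assms(3)]]) blast+

lemma inverse_notin_localization:
  assumes "subring R" "prime_ideal R P" "x \<in> P" "x \<noteq> 0"
  shows "inverse x \<notin> localization R P"
proof
  assume "inverse x \<in> localization R P"
  then have "x * inverse x \<in> P"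
    using prime_localization_mult_mem[OF assms(1,2,2) order.refl assms(3), of "inverse x"] assms(4)
      subring_1[OF assms(1)] by simp
  then show False
    using prime_ideal_one_notin[OF assms(2)] assms(4) by simp
qed

lemma valuation_domain_superset:
  "valuation_domain V \<Longrightarrow> V \<subseteq> W \<Longrightarrow> valuation_domain W"
  by (auto simp: valuation_domain_def)

lemma valuation_domain_power2_imp:
  assumes "valuation_domain V" "\<And>x y. x \<in> V \<Longrightarrow> y \<in> V \<Longrightarrow> x * y \<in> V" "w\<^sup>2 \<in> V"
  shows "w \<in> V"
proof (rule ccontr)
  assume "w \<notin> V"
  moreover have "w \<noteq> 0"
    using assms(3) \<open>w \<notin> V\<close> by auto
  ultimately have "inverse w \<in> V"
    using assms(1) by (auto simp: valuation_domain_def)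
  then have "w\<^sup>2 * inverse w \<in> V"
    using assms(2,3) by blast
  moreover have "w\<^sup>2 * inverse w = w"
    using \<open>w \<noteq> 0\<close> by (simp add: power2_eq_square field_simps)
  ultimately show False
    using \<open>w \<notin> V\<close> by simp
qed

lemma PvMD_localization_valuation_domain:
  assumes "subring R" "PvMD R" "t_prime R P"
  shows "valuation_domain (localization R P)"
proof -
  have "ideal R P" "P \<noteq> R" "t_ideal R P"
    using assms(3) by (auto simp: t_prime_def prime_ideal_def)
  then obtain M where "t_maximal R M" "P \<subseteq> M"
    using exists_t_maximal_superset[OF assms(1)] by blast
  then have "valuation_domain (localization R M)"
    using assms(2) by (simp add: PvMD_def)
  then show ?thesis
    using localization_antimono[OF \<open>P \<subseteq> M\<close>] by (rule valuation_domain_superset)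
qed

lemma common_denominator:
  assumes "subring R" "prime_ideal R P" "finite T" "T \<subseteq> localization R P"
  shows "\<exists>d\<in>R. d \<notin> P \<and> (\<forall>z\<in>T. d * z \<in> R)"
  using assms(3,4)
proof (induction T rule: finite_induct)
  case empty
  then show ?case
    using subring_1[OF assms(1)] prime_ideal_one_notin[OF assms(2)] by blast
next
  case (insert z T)
  then obtain d where d: "d \<in> R" "d \<notin> P" "\<forall>w\<in>T. d * w \<in> R"
    by auto
  obtain a s where a: "a \<in> R" "s \<in> R" "s \<notin> P" "z = a / s"
    using insert.prems by (auto elim: localizationE)
  have "d * s * z = d * a"
    using a prime_ideal_notin_nonzero[OF assms(2)] by simp
  moreover have "d * s * w \<in> R" if "w \<in> T" for w
    using subring_mult[OF assms(1) a(2) d(3)[rule_format, OF that]] by (simp add: ac_simps)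
  moreover have "d * s \<in> R" "d * s \<notin> P"
    using subring_mult[OF assms(1) d(1) a(2)] prime_ideal_mult[OF assms(2) d(1) a(2)] d(2) a(3)
    by auto
  moreover have "d * s * z \<in> R"
    unfolding \<open>d * s * z = d * a\<close> by (rule subring_mult[OF assms(1) d(1) a(1)])
  ultimately show ?case
    by blast
qed

lemma ideal_INT:
  assumes "\<And>i. ideal R (I i)"
  shows "ideal R (\<Inter>i. I i)"
  unfolding ideal_def submod_def
proof (intro conjI ballI)
  show "(\<Inter>i. I i) \<subseteq> R"
    using ideal_subset[OF assms, of undefined] by blast
  show "0 \<in> (\<Inter>i. I i)"
    using ideal_0[OF assms] by blast
next
  fix x y assume "x \<in> (\<Inter>i. I i)" "y \<in> (\<Inter>i. I i)"
  then show "x + y \<in> (\<Inter>i. I i)"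
    using ideal_add[OF assms] by blast
next
  fix r x assume "r \<in> R" "x \<in> (\<Inter>i. I i)"
  then show "r * x \<in> (\<Inter>i. I i)"
    using ideal_mult[OF assms] by blast
qed

text \<open>The contraction \<open>c R\<^sub>P \<inter> R\<close>; for \<open>c = 0\<close> it is all of R, because \<open>r / 0 = 0\<close>.\<close>
definition contracted_principal :: "'a::field set \<Rightarrow> 'a set \<Rightarrow> 'a \<Rightarrow> 'a set" where
  "contracted_principal R P c = {r \<in> R. r / c \<in> localization R P}"

lemma ideal_contracted_principal:
  assumes "subring R" "prime_ideal R P"
  shows "ideal R (contracted_principal R P c)"
  unfolding ideal_def submod_def contracted_principal_def
proof (intro conjI ballI)
  show "0 \<in> {r \<in> R. r / c \<in> localization R P}"
    using subring_0[OF assms(1)] localization_superset[OF assms] by auto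
next
  fix x y assume "x \<in> {r \<in> R. r / c \<in> localization R P}" "y \<in> {r \<in> R. r / c \<in> localization R P}"
  then show "x + y \<in> {r \<in> R. r / c \<in> localization R P}"
    using subring_add[OF assms(1)] localization_add[OF assms] by (auto simp: add_divide_distrib)
next
  fix r x assume "r \<in> R" "x \<in> {r \<in> R. r / c \<in> localization R P}"
  then show "r * x \<in> {r \<in> R. r / c \<in> localization R P}"
    using subring_mult[OF assms(1)] localization_mult[OF assms] localization_superset[OF assms]
    by (auto simp: times_divide_eq_right[symmetric] simp del: times_divide_eq_right)
qed auto

lemma contracted_principal_subset:
  assumes "subring R" "prime_ideal R P" "c \<in> P" "c \<noteq> 0"
  shows "contracted_principal R P c \<subseteq> P"
proof
  fix r assume "r \<in> contracted_principal R P c"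
  then have "c * (r / c) \<in> P"
    using prime_localization_mult_mem[OF assms(1,2,2) order.refl assms(3), of "r / c"] assms(4)
    by (simp add: contracted_principal_def)
  then show "r \<in> P"
    using assms(4) by simp
qed

lemma contracted_principal_saturated:
  assumes "subring R" "prime_ideal R P" "r \<in> R" "s \<in> R" "s \<notin> P"
    and "r * s \<in> contracted_principal R P c"
  shows "r \<in> contracted_principal R P c"
proof -
  have "(r * s) / c \<in> localization R P"
    using assms(6) by (simp add: contracted_principal_def)
  then have "(r * s) / c * inverse s \<in> localization R P"
    using localization_mult[OF assms(1,2) _ inverse_mem_localization[OF assms(1,4,5)]] by blast
  moreover have "(r * s) / c * inverse s = r / c"
    using prime_ideal_notin_nonzero[OF assms(2,5)] by (simp add: field_simps)
  ultimately have "r / c \<in> localization R P"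
    by metis
  then show ?thesis
    using assms(3) by (simp add: contracted_principal_def)
qed

lemma notin_contracted_principal_square:
  assumes "subring R" "prime_ideal R P" "c \<in> P" "c \<noteq> 0"
  shows "c \<notin> contracted_principal R P (c\<^sup>2)"
proof -
  have "c / c\<^sup>2 = inverse c"
    using assms(4) by (simp add: power2_eq_square field_simps)
  then show ?thesis
    using inverse_notin_localization[OF assms] by (simp add: contracted_principal_def)
qed

section \<open>Primes with a valuation localization\<close>

locale valuation_localization =
  fixes R P :: "'a::field set"
  assumes subring: "subring R" and prime: "prime_ideal R P"
    and valuation: "valuation_domain (localization R P)"
begin

lemma valuation_cases: "z \<noteq> 0 \<Longrightarrow> z \<in> localization R P \<or> inverse z \<in> localization R P"
  using valuation by (simp add: valuation_domain_def)

lemma prime_ideal_Inter_contracted_powers: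
  assumes "x \<in> P" "x \<noteq> 0"
  shows "prime_ideal R (\<Inter>n. contracted_principal R P (x ^ n))" (is "prime_ideal R ?I")
  unfolding prime_ideal_def
proof (intro conjI ballI impI)
  show "ideal R ?I"
    using ideal_contracted_principal[OF subring prime] by (rule ideal_INT)
  have "x \<notin> contracted_principal R P (x\<^sup>2)"
    by (rule notin_contracted_principal_square[OF subring prime assms])
  then show "?I \<noteq> R"
    using assms(1) ideal_subset[OF prime_ideal_ideal[OF prime]] by blast
next
  fix y z assume yz: "y \<in> R" "z \<in> R" "y * z \<in> ?I"
  show "y \<in> ?I \<or> z \<in> ?I"
  proof (cases "y \<in> ?I")
    case False
    then obtain m where m: "y / x ^ m \<notin> localization R P"
      using yz(1) by (auto simp: contracted_principal_def)
    then have "y \<noteq> 0"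
      using localization_superset[OF subring prime] subring_0[OF subring] by auto
    then have ym: "x ^ m / y \<in> localization R P"
      using valuation_cases[of "y / x ^ m"] m assms(2) by auto
    have "z / x ^ n \<in> localization R P" for n
    proof -
      have "(y * z) / x ^ (n + m) \<in> localization R P"
        using yz(3) by (auto simp: contracted_principal_def)
      then have "(y * z) / x ^ (n + m) * (x ^ m / y) \<in> localization R P"
        using localization_mult[OF subring prime _ ym] by blast
      moreover have "(y * z) / x ^ (n + m) * (x ^ m / y) = z / x ^ n"
        using \<open>y \<noteq> 0\<close> assms(2) by (simp add: power_add field_simps)
      ultimately show ?thesis
        by simp
    qed
    then show ?thesis
      using yz(2) by (simp add: contracted_principal_def)
  qed simp
qed

lemma Inter_contracted_powers_psubset:
  assumes "x \<in> P" "x \<noteq> 0"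
  shows "(\<Inter>n. contracted_principal R P (x ^ n)) \<subset> P"
proof -
  have "(\<Inter>n. contracted_principal R P (x ^ n)) \<subseteq> contracted_principal R P (x ^ 1)"
    by blast
  also have "\<dots> \<subseteq> P"
    using contracted_principal_subset[OF subring prime] assms by simp
  finally show ?thesis
    using notin_contracted_principal_square[OF subring prime assms] assms(1) by blast
qed

text \<open>Otherwise \<open>a / x\<^sup>n \<in> R\<^sub>P\<close> for all n, so a lies in the prime \<open>\<Inter>\<^sub>n x\<^sup>n R\<^sub>P \<inter> R\<close>,
  which is strictly smaller than P.\<close>
lemma power_mem_contracted_principal_square:
  assumes "minimal_prime_of R P (gen_sub R {a})" "x \<in> P"
  shows "\<exists>n. x ^ n \<in> contracted_principal R P (a\<^sup>2)"
proof (rule ccontr)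
  let ?L = "localization R P"
  let ?I = "\<Inter>n. contracted_principal R P (x ^ n)"
  assume none: "\<nexists>n. x ^ n \<in> contracted_principal R P (a\<^sup>2)"
  have PR: "P \<subseteq> R"
    by (rule ideal_subset[OF prime_ideal_ideal[OF prime]])
  have "a \<in> P"
    using assms(1) gen_sub_superset[OF subring, of "{a}"] by (auto simp: minimal_prime_of_def)
  have "x \<noteq> 0"
    using none ideal_0[OF ideal_contracted_principal[OF subring prime]] by (metis power_one_right)
  have "inverse (x ^ k / a\<^sup>2) \<in> ?L" for k
  proof -
    have "x ^ k / a\<^sup>2 \<notin> ?L"
      using none subring_power[OF subring, of x k] assms(2) PR
      by (auto simp: contracted_principal_def)
    then show ?thesis
      using valuation_cases[of "x ^ k / a\<^sup>2"] localization_superset[OF subring prime]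
        subring_0[OF subring] by fastforce
  qed
  then have "(a / x ^ n)\<^sup>2 \<in> ?L" for n
    by (simp add: power_divide power_mult[symmetric] mult.commute)
  then have "a / x ^ n \<in> ?L" for n
    using valuation_domain_power2_imp[OF valuation localization_mult[OF subring prime]] by blast
  then have "gen_sub R {a} \<subseteq> ?I"
    using \<open>a \<in> P\<close> PR ideal_INT[OF ideal_contracted_principal[OF subring prime]]
    by (intro gen_sub_least) (auto simp: contracted_principal_def ideal_def)
  then have "?I = P"
    using assms(1) prime_ideal_Inter_contracted_powers[OF assms(2) \<open>x \<noteq> 0\<close>]
      Inter_contracted_powers_psubset[OF assms(2) \<open>x \<noteq> 0\<close>]
    unfolding minimal_prime_of_def by blast
  then show False
    using Inter_contracted_powers_psubset[OF assms(2) \<open>x \<noteq> 0\<close>] by blast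
qed

lemma minimal_prime_principal_imp_branched:
  assumes "P \<noteq> {0}" "minimal_prime_of R P (gen_sub R {a})"
  shows "branched R P"
proof -
  define Q where "Q = contracted_principal R P (a\<^sup>2)"
  have PR: "P \<subseteq> R"
    by (rule ideal_subset[OF prime_ideal_ideal[OF prime]])
  have "a \<in> P"
    using assms(2) gen_sub_superset[OF subring, of "{a}"] by (auto simp: minimal_prime_of_def)
  have "a \<noteq> 0"
    using minimal_prime_of_subset_zero[OF subring assms(2)] gen_sub_least[OF submod_zero, of "{a}" R]
      assms(1) by auto
  have "a \<notin> Q"
    unfolding Q_def by (rule notin_contracted_principal_square[OF subring prime \<open>a \<in> P\<close> \<open>a \<noteq> 0\<close>])
  have "a\<^sup>2 \<in> P"
    using ideal_mult[OF prime_ideal_ideal[OF prime]] \<open>a \<in> P\<close> PR by (auto simp: power2_eq_square)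
  then have "Q \<subseteq> P"
    unfolding Q_def using \<open>a \<noteq> 0\<close> by (intro contracted_principal_subset[OF subring prime]) auto
  have radical: "radical R Q = P"
  proof
    show "radical R Q \<subseteq> P"
      using \<open>Q \<subseteq> P\<close> prime_ideal_power[OF subring prime] by (auto simp: radical_def)
    show "P \<subseteq> radical R Q"
      using power_mem_contracted_principal_square[OF assms(2)] PR by (auto simp: radical_def Q_def)
  qed
  have "primary_ideal R Q"
  proof (rule primary_idealI)
    show "ideal R Q"
      unfolding Q_def by (rule ideal_contracted_principal[OF subring prime])
    show "Q \<noteq> R"
      using \<open>a \<notin> Q\<close> \<open>a \<in> P\<close> PR by auto
    show "r \<in> Q" if "r \<in> R" "s \<in> R" "s \<notin> radical R Q" "r * s \<in> Q" for r s
      using contracted_principal_saturated[OF subring prime that(1,2)] that(3,4) radical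
      unfolding Q_def by blast
  qed
  then show ?thesis
    unfolding branched_def using radical \<open>a \<in> P\<close> \<open>a \<notin> Q\<close> by blast
qed

text \<open>Ideals of R contracted from \<open>R\<^sub>P\<close> are totally ordered, like the ideals of \<open>R\<^sub>P\<close>.\<close>
lemma saturated_ideals_comparable:
  assumes "ideal R Q\<^sub>1" "ideal R Q\<^sub>2"
    and sat\<^sub>1: "\<And>a s. a \<in> R \<Longrightarrow> s \<in> R \<Longrightarrow> s \<notin> P \<Longrightarrow> a * s \<in> Q\<^sub>1 \<Longrightarrow> a \<in> Q\<^sub>1"
    and sat\<^sub>2: "\<And>a s. a \<in> R \<Longrightarrow> s \<in> R \<Longrightarrow> s \<notin> P \<Longrightarrow> a * s \<in> Q\<^sub>2 \<Longrightarrow> a \<in> Q\<^sub>2"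
  shows "Q\<^sub>1 \<subseteq> Q\<^sub>2 \<or> Q\<^sub>2 \<subseteq> Q\<^sub>1"
proof (rule ccontr)
  assume "\<not> (Q\<^sub>1 \<subseteq> Q\<^sub>2 \<or> Q\<^sub>2 \<subseteq> Q\<^sub>1)"
  then obtain p z where pz: "p \<in> Q\<^sub>1" "p \<notin> Q\<^sub>2" "z \<in> Q\<^sub>2" "z \<notin> Q\<^sub>1"
    by blast
  then have "p \<noteq> 0" "z \<noteq> 0"
    using ideal_0[OF assms(1)] ideal_0[OF assms(2)] by metis+
  then have "p / z \<noteq> 0"
    by simp
  then consider "p / z \<in> localization R P" | "z / p \<in> localization R P"
    using valuation_cases by fastforce
  then show False
  proof cases
    case 1
    have "z * (p / z) = p"
      using \<open>z \<noteq> 0\<close> by simp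
    then have "p \<in> Q\<^sub>2"
      using localization_mult_mem[OF subring prime assms(2) sat\<^sub>2 pz(3) 1] pz(1)
        ideal_subset[OF assms(1)] by (simp add: subsetD)
    with pz(2) show False
      by blast
  next
    case 2
    have "p * (z / p) = z"
      using \<open>p \<noteq> 0\<close> by simp
    then have "z \<in> Q\<^sub>1"
      using localization_mult_mem[OF subring prime assms(1) sat\<^sub>1 pz(1) 2] pz(3)
        ideal_subset[OF assms(2)] by (simp add: subsetD)
    with pz(4) show False
      by blast
  qed
qed

text \<open>A P-primary \<open>Q \<noteq> P\<close> and a prime \<open>Q' \<subset> P\<close> containing an element of \<open>P - Q\<close> would be
  comparable, forcing \<open>Q \<subseteq> Q'\<close> and hence \<open>P = rad Q \<subseteq> Q'\<close>.\<close>
lemma branched_imp_not_Union: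
  assumes "branched R P"
  shows "P \<noteq> \<Union>{Q. prime_ideal R Q \<and> Q \<subset> P}"
proof
  assume union: "P = \<Union>{Q. prime_ideal R Q \<and> Q \<subset> P}"
  obtain Q where Q: "primary_ideal R Q" "radical R Q = P" "Q \<noteq> P"
    using assms by (auto simp: branched_def)
  have "Q \<subseteq> P"
    using primary_ideal_subset_radical[OF Q(1)] Q(2) by blast
  then obtain p where p: "p \<in> P" "p \<notin> Q"
    using Q(3) by blast
  then obtain Q' where Q': "prime_ideal R Q'" "Q' \<subset> P" "p \<in> Q'"
    using union by blast
  have "ideal R Q"
    using Q(1) by (simp add: primary_ideal_def)
  moreover have "a \<in> Q" if "a \<in> R" "s \<in> R" "s \<notin> P" "a * s \<in> Q" for a s
    using Q(1,2) that unfolding primary_ideal_def radical_def by blast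
  moreover have "a \<in> Q'" if "a \<in> R" "s \<in> R" "s \<notin> P" "a * s \<in> Q'" for a s
    using prime_ideal_mult[OF Q'(1)] Q'(2) that by blast
  ultimately have "Q \<subseteq> Q'"
    using saturated_ideals_comparable[OF _ prime_ideal_ideal[OF Q'(1)]] p(2) Q'(3) by blast
  then have "P \<subseteq> Q'"
    using Q(2) prime_ideal_power[OF subring Q'(1)] by (auto simp: radical_def)
  with Q'(2) show False
    by blast
qed

lemma exists_localization_divisor:
  assumes "finite S" "S \<noteq> {}" "0 \<notin> S"
  shows "\<exists>x\<in>S. \<forall>s\<in>S. s / x \<in> localization R P"
  using assms
proof (induction S rule: finite_ne_induct)
  case (singleton x)
  then show ?case
    using localization_superset[OF subring prime] subring_1[OF subring] by auto
next
  case (insert y S)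
  then obtain x where x: "x \<in> S" "\<forall>s\<in>S. s / x \<in> localization R P"
    by auto
  have "y \<noteq> 0" "x \<noteq> 0"
    using insert.prems x(1) by auto
  then consider "y / x \<in> localization R P" | "x / y \<in> localization R P"
    using valuation_cases[of "y / x"] by auto
  then show ?case
  proof cases
    case 1
    then show ?thesis
      using x by auto
  next
    case 2
    have "s / y \<in> localization R P" if "s \<in> insert y S" for s
    proof (cases "s = y")
      case True
      then show ?thesis
        using \<open>y \<noteq> 0\<close> localization_superset[OF subring prime] subring_1[OF subring] by auto
    next
      case False
      then have "s / x \<in> localization R P"
        using that x(2) by auto
      then have "s / x * (x / y) \<in> localization R P"
        using localization_mult[OF subring prime _ 2] by blast
      then show ?thesis
        using \<open>x \<noteq> 0\<close> by simp
    qed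
    then show ?thesis
      by blast
  qed
qed

text \<open>If x generates \<open>J R\<^sub>P\<close> for \<open>J = (S)\<close>, a common denominator \<open>d \<notin> P\<close> gives \<open>d / x \<in> (R : J)\<close>,
  so every \<open>y \<in> J\<^sub>v\<close> has \<open>y d \<in> x R\<close>.\<close>
lemma v_op_gen_sub_subset_prime:
  assumes "finite S" "x \<in> S" "x \<noteq> 0" "\<forall>s\<in>S. s / x \<in> localization R P"
    and "prime_ideal R Q" "Q \<subseteq> P" "x \<in> Q"
  shows "v_op R (gen_sub R S) \<inter> R \<subseteq> Q"
proof
  fix y assume y: "y \<in> v_op R (gen_sub R S) \<inter> R"
  obtain d where d: "d \<in> R" "d \<notin> P" "\<forall>s\<in>S. d * (s / x) \<in> R"
    using common_denominator[OF subring prime, of "(\<lambda>s. s / x) ` S"] assms(1,4) by auto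
  have "d / x \<in> colon R (gen_sub R S)"
    using d(3) by (intro mem_colon_gen_sub[OF subring]) auto
  then have "y * (d / x) \<in> R"
    using y by (intro v_op_mult_colon) auto
  then have "y * (d / x) * x \<in> Q"
    by (rule ideal_mult[OF prime_ideal_ideal[OF assms(5)] _ assms(7)])
  moreover have "y * (d / x) * x = y * d"
    using assms(3) by simp
  ultimately have "y * d \<in> Q"
    by metis
  then show "y \<in> Q"
    using prime_ideal_mult[OF assms(5)] y d(1,2) assms(6) by blast
qed

lemma minimal_prime_v_finite_imp_not_Union:
  assumes "finite S" "gen_sub R S \<noteq> {0}" "minimal_prime_of R P (v_op R (gen_sub R S))"
  shows "P \<noteq> \<Union>{Q. prime_ideal R Q \<and> Q \<subset> P}"
proof
  assume union: "P = \<Union>{Q. prime_ideal R Q \<and> Q \<subset> P}"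
  have JvP: "v_op R (gen_sub R S) \<subseteq> P"
    using assms(3) by (simp add: minimal_prime_of_def)
  obtain x where x: "x \<in> S - {0}" "\<forall>s\<in>S - {0}. s / x \<in> localization R P"
    using exists_localization_divisor[of "S - {0}"] gen_sub_nonzero_imp[OF assms(2)] assms(1) by auto
  then have "\<forall>s\<in>S. s / x \<in> localization R P"
    using localization_superset[OF subring prime] subring_0[OF subring]
    by (metis DiffI div_0 singletonD subsetD)
  have "x \<in> P"
    using x(1) gen_sub_superset[OF subring, of S] v_op_superset[of "gen_sub R S" R] JvP by blast
  then obtain Q where Q: "prime_ideal R Q" "Q \<subset> P" "x \<in> Q"
    using union by blast
  have "v_op R (gen_sub R S) \<subseteq> Q"
    using v_op_gen_sub_subset_prime[OF assms(1) _ _ \<open>\<forall>s\<in>S. s / x \<in> localization R P\<close> Q(1) _ Q(3)]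
      x(1) Q(2) JvP ideal_subset[OF prime_ideal_ideal[OF prime]] by blast
  then have "Q = P"
    using assms(3) Q(1,2) unfolding minimal_prime_of_def by blast
  then show False
    using Q(2) by blast
qed

end

lemma not_Union_imp_minimal_prime_principal:
  assumes "subring R" "prime_ideal R P" "P \<noteq> \<Union>{Q. prime_ideal R Q \<and> Q \<subset> P}"
  shows "\<exists>a\<in>R. minimal_prime_of R P (gen_sub R {a})"
proof -
  obtain a where a: "a \<in> P" "\<And>Q. prime_ideal R Q \<Longrightarrow> Q \<subset> P \<Longrightarrow> a \<notin> Q"
    using assms(3) by blast
  have "gen_sub R {a} \<subseteq> P"
    using gen_sub_least[of R P "{a}"] prime_ideal_ideal[OF assms(2)] a(1) by (simp add: ideal_def)
  moreover have "Q = P" if "prime_ideal R Q" "gen_sub R {a} \<subseteq> Q" "Q \<subseteq> P" for Q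
    using a(2)[OF that(1)] that(2,3) gen_sub_superset[OF assms(1), of "{a}"] by blast
  ultimately show ?thesis
    unfolding minimal_prime_of_def
    using assms(2) a(1) ideal_subset[OF prime_ideal_ideal[OF assms(2)]] by blast
qed

lemma minimal_prime_fg_imp_v_finite:
  assumes "subring R" "t_prime R P" "finite S" "minimal_prime_of R P (gen_sub R S)"
  shows "gen_sub R S \<noteq> {0} \<and> ideal R (v_op R (gen_sub R S))
    \<and> minimal_prime_of R P (v_op R (gen_sub R S))"
proof -
  have prime: "prime_ideal R P" and t: "t_ideal R P"
    using assms(2) by (simp_all add: t_prime_def)
  have "P \<noteq> {0}"
    using t by (simp add: t_ideal_def fractional_ideal_def)
  have JP: "gen_sub R S \<subseteq> P"
    using assms(4) by (simp add: minimal_prime_of_def)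
  have "gen_sub R S \<noteq> {0}"
    using minimal_prime_of_subset_zero[OF assms(1,4)] \<open>P \<noteq> {0}\<close> by blast
  moreover have JvP: "v_op R (gen_sub R S) \<subseteq> P"
    by (rule v_op_subset_t_ideal[OF t assms(3) \<open>gen_sub R S \<noteq> {0}\<close> JP])
  moreover have "ideal R (v_op R (gen_sub R S))"
    using JvP ideal_subset[OF prime_ideal_ideal[OF prime]] v_op_submod[OF assms(1)]
    by (auto simp: ideal_def)
  moreover have "minimal_prime_of R P (v_op R (gen_sub R S))"
    using minimal_prime_of_mono[OF assms(4) v_op_superset JvP] .
  ultimately show ?thesis
    by blast
qed

theorem proposition1p2:
  fixes R :: "'a::field set" and P :: "'a set"
  assumes "subring R" and "quotient_field_is_UNIV R" and "R \<noteq> UNIV"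
    and "PvMD R" and "t_prime R P"
  shows "(branched R P \<longleftrightarrow> (\<exists>a\<in>R. minimal_prime_of R P (gen_sub R {a})))
       \<and> (branched R P \<longleftrightarrow> (\<exists>S. finite S \<and> S \<subseteq> R \<and> minimal_prime_of R P (gen_sub R S)))
       \<and> (branched R P \<longleftrightarrow> (\<exists>S. finite S \<and> gen_sub R S \<noteq> {0} \<and> ideal R (v_op R (gen_sub R S))
                               \<and> minimal_prime_of R P (v_op R (gen_sub R S))))
       \<and> (branched R P \<longleftrightarrow> P \<noteq> \<Union>{Q. prime_ideal R Q \<and> Q \<subset> P})"
proof -
  have prime: "prime_ideal R P" and "P \<noteq> {0}"
    using assms(5) by (simp_all add: t_prime_def t_ideal_def fractional_ideal_def)
  interpret valuation_localization R P
    using assms(1) prime PvMD_localization_valuation_domain[OF assms(1,4,5)]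
    by unfold_locales
  let ?ii = "\<exists>a\<in>R. minimal_prime_of R P (gen_sub R {a})"
  let ?iii = "\<exists>S. finite S \<and> S \<subseteq> R \<and> minimal_prime_of R P (gen_sub R S)"
  let ?iv = "\<exists>S. finite S \<and> gen_sub R S \<noteq> {0} \<and> ideal R (v_op R (gen_sub R S))
    \<and> minimal_prime_of R P (v_op R (gen_sub R S))"
  let ?v = "P \<noteq> \<Union>{Q. prime_ideal R Q \<and> Q \<subset> P}"
  have i_v: "branched R P \<Longrightarrow> ?v"
    by (rule branched_imp_not_Union)
  have v_ii: "?v \<Longrightarrow> ?ii"
    by (rule not_Union_imp_minimal_prime_principal[OF assms(1) prime])
  have ii_i: "?ii \<Longrightarrow> branched R P"
    using minimal_prime_principal_imp_branched[OF \<open>P \<noteq> {0}\<close>] by metis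
  have ii_iii: "?ii \<Longrightarrow> ?iii"
    by (meson empty_subsetI finite.emptyI finite_insert insert_subset)
  have iii_iv: "?iii \<Longrightarrow> ?iv"
    using minimal_prime_fg_imp_v_finite[OF assms(1,5)] by metis
  have iv_v: "?iv \<Longrightarrow> ?v"
    using minimal_prime_v_finite_imp_not_Union by metis
  show ?thesis
    using i_v v_ii ii_i ii_iii iii_iv iv_v by (intro conjI iffI) metis+
qed

end
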